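(* Let $p>2$ be an integer and $\theta\in(0,1)$. For $\bm q\in\mathbb S^{n-1}$ let $\rho=\tfrac12\min_{1\le i\le n}\min\{\|\bm q-\bm e_i\|_2^2,\|\bm q+\bm e_i\|_2^2\}$. Then $$\rho\le\frac{C_p}{\theta(1-\theta)}\Big(\theta-\mathbb E_\Omega\|\bm q_\Omega\|_2^p\Big),\qquad C_p=\big(1-2(0.5)^{p/2}\big)^{-1}.$$
   Context: $\bm e_i$ are the standard basis vectors of $\mathbb R^n$. $\Omega$ denotes a random subset of $\{1,\dots,n\}$ in which each index is included independently with probability $\theta$ (the support of a vector with i.i.d. $\mathrm{Ber}(\theta)$ entries), and $\bm q_\Omega$ is the subvector of $\bm q$ with entries indexed by $\Omega$ (so $\|\bm q_\emptyset\|_2=0$). *)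

theory Defs
  imports "HOL-Analysis.Analysis" "HOL-Probability.Probability"
begin

definition bern_subset :: "real \<Rightarrow> ('n::finite) set pmf" where
  "bern_subset \<theta> = map_pmf (\<lambda>b. {i. b i}) (Pi_pmf UNIV False (\<lambda>_. bernoulli_pmf \<theta>))"

definition subvec_norm :: "real ^ ('n::finite) \<Rightarrow> 'n set \<Rightarrow> real" where
  "subvec_norm q \<Omega> = sqrt (\<Sum>i\<in>\<Omega>. (q $ i)\<^sup>2)"

end

theory Submission
  imports Defs
begin

text \<open>
  Put \<open>x\<^sub>i = q\<^sub>i\<^sup>2\<close> and \<open>T = \<Sum>\<^sub>i\<^sub>\<in>\<^sub>\<Omega> x\<^sub>i\<close>, so that \<open>0 \<le> T \<le> 1\<close> and the quantity inside the
  expectation is \<open>T\<^bsup>p/2\<^esup>\<close>. On \<open>[0, 1]\<close> the power \<open>T\<^bsup>p/2\<^esup>\<close> lies below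
  \<open>T - c T (1 - T)\<close> with \<open>c = 1/C\<^sub>p\<close>, and by independence \<open>\<bbbE> T = \<theta>\<close> and
  \<open>\<bbbE> T\<^sup>2 = \<theta>\<^sup>2 + \<theta> (1 - \<theta>) \<Sum>\<^sub>i x\<^sub>i\<^sup>2\<close>; hence the right-hand side is at least
  \<open>1 - \<Sum>\<^sub>i q\<^sub>i\<^sup>4\<close>. If \<open>q\<^sub>m\<close> is a coordinate of largest modulus, the distance to
  \<open>\<plusminus>e\<^sub>m\<close> gives \<open>\<rho> \<le> 1 - |q\<^sub>m|\<close>, while \<open>\<Sum>\<^sub>i q\<^sub>i\<^sup>4 \<le> q\<^sub>m\<^sup>2 \<Sum>\<^sub>i q\<^sub>i\<^sup>2 \<le> |q\<^sub>m|\<close>.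
\<close>

lemma integrable_bern_subset [simp, intro]:
  "integrable (measure_pmf (bern_subset \<theta>)) (f :: 'n::finite set \<Rightarrow> real)"
  by (rule integrable_measure_pmf_finite) simp

lemma expectation_bern_subset_superset:
  fixes S :: "'n::finite set"
  assumes "0 \<le> \<theta>" "\<theta> \<le> 1"
  shows "measure_pmf.expectation (bern_subset \<theta>) (\<lambda>\<Omega>. of_bool (S \<subseteq> \<Omega>)) = \<theta> ^ card S"
proof -
  have indicator_as_prod: "(\<lambda>b::'n \<Rightarrow> bool. of_bool (S \<subseteq> {i. b i}) :: real) =
      (\<lambda>b. \<Prod>i\<in>UNIV. of_bool (i \<in> S \<longrightarrow> b i))"
    by (rule ext) (auto simp: prod_zero_iff intro!: prod.neutral)
  have "measure_pmf.expectation (bern_subset \<theta>) (\<lambda>\<Omega>. of_bool (S \<subseteq> \<Omega>) :: real)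
      = measure_pmf.expectation (Pi_pmf UNIV False (\<lambda>_. bernoulli_pmf \<theta>))
          (\<lambda>b. of_bool (S \<subseteq> {i. b i}))"
    unfolding bern_subset_def by simp
  also have "\<dots> = (\<Prod>i\<in>UNIV. measure_pmf.expectation (bernoulli_pmf \<theta>) (\<lambda>v. of_bool (i \<in> S \<longrightarrow> v)))"
    unfolding indicator_as_prod by (rule expectation_prod_Pi_pmf) (auto intro: integrable_measure_pmf_finite)
  also have "\<dots> = (\<Prod>i\<in>UNIV. if i \<in> S then \<theta> else 1)"
    using assms by (intro prod.cong) auto
  finally show ?thesis
    by (simp add: prod.If_cases)
qed

lemma sum_subset_eq_indicator_sum:
  "(\<Sum>i\<in>\<Omega>. x i) = (\<Sum>i\<in>UNIV. x i * of_bool ({i} \<subseteq> \<Omega>) :: 'b::comm_semiring_1)"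
  for \<Omega> :: "'n::finite set"
  by simp

lemma expectation_bern_subset_sum:
  fixes x :: "'n::finite \<Rightarrow> real"
  assumes "0 \<le> \<theta>" "\<theta> \<le> 1"
  shows "measure_pmf.expectation (bern_subset \<theta>) (\<lambda>\<Omega>. \<Sum>i\<in>\<Omega>. x i) = \<theta> * (\<Sum>i\<in>UNIV. x i)"
  \<comment> \<open>instantiated: the bare rule would rewrite its own right-hand side forever\<close>
  unfolding sum_subset_eq_indicator_sum[of x]
  by (simp only: Bochner_Integration.integral_sum integrable_bern_subset integral_mult_right_zero
      expectation_bern_subset_superset[OF assms]) (simp add: sum_distrib_left mult.commute)

lemma square_sum_subset_eq_indicator_sum:
  "(\<Sum>i\<in>\<Omega>. x i)\<^sup>2 = (\<Sum>i\<in>UNIV. \<Sum>j\<in>UNIV. x i * x j * of_bool ({i, j} \<subseteq> \<Omega>) :: 'b::comm_semiring_1)"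
  for \<Omega> :: "'n::finite set"
  unfolding sum_subset_eq_indicator_sum[of x] power2_eq_square sum_product
  by (intro sum.cong refl) auto

lemma expectation_bern_subset_square_sum:
  fixes x :: "'n::finite \<Rightarrow> real"
  assumes "0 \<le> \<theta>" "\<theta> \<le> 1"
  shows "measure_pmf.expectation (bern_subset \<theta>) (\<lambda>\<Omega>. (\<Sum>i\<in>\<Omega>. x i)\<^sup>2)
      = \<theta>\<^sup>2 * (\<Sum>i\<in>UNIV. x i)\<^sup>2 + \<theta> * (1 - \<theta>) * (\<Sum>i\<in>UNIV. (x i)\<^sup>2)"
proof -
  have card_pair: "\<theta> ^ card {i, j} = \<theta>\<^sup>2 + of_bool (i = j) * (\<theta> - \<theta>\<^sup>2)" for i j :: 'n
    by (cases "i = j") (simp_all add: power2_eq_square)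
  have "measure_pmf.expectation (bern_subset \<theta>) (\<lambda>\<Omega>. (\<Sum>i\<in>\<Omega>. x i)\<^sup>2)
      = (\<Sum>i\<in>UNIV. \<Sum>j\<in>UNIV. x i * x j * \<theta> ^ card {i, j})"
    unfolding square_sum_subset_eq_indicator_sum
    by (simp only: Bochner_Integration.integral_sum integrable_bern_subset integral_mult_right_zero
        expectation_bern_subset_superset[OF assms])
  also have "\<dots> = (\<Sum>i\<in>UNIV. \<Sum>j\<in>UNIV. \<theta>\<^sup>2 * (x i * x j))
      + (\<Sum>i\<in>UNIV. \<Sum>j\<in>UNIV. (\<theta> - \<theta>\<^sup>2) * (x i * x j) * of_bool (i = j))"
    by (simp add: card_pair ring_distribs sum.distrib mult_ac del: sum_mult_of_bool_eq)
  also have "\<dots> = \<theta>\<^sup>2 * (\<Sum>i\<in>UNIV. \<Sum>j\<in>UNIV. x i * x j) + (\<theta> - \<theta>\<^sup>2) * (\<Sum>i\<in>UNIV. (x i)\<^sup>2)"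
    by (simp add: sum_distrib_left power2_eq_square)
  finally show ?thesis
    by (simp add: power2_eq_square sum_product algebra_simps)
qed

lemma sqrt_power_le:
  fixes t :: real
  assumes "0 \<le> t" "t \<le> 1" "2 < p"
  shows "sqrt t ^ p \<le> t - (1 - 2 * 0.5 powr (real p / 2)) * (t - t\<^sup>2)"
proof -
  define u where "u = sqrt t"
  have u: "0 \<le> u" "u \<le> 1" "t = u\<^sup>2"
    using assms by (auto simp: u_def)
  \<comment> \<open>\<open>k = 1/2\<close> works for \<open>p = 3\<close> by AM-GM, \<open>k = 1\<close> for \<open>p \<ge> 4\<close> since then \<open>t\<^bsup>p/2\<^esup> \<le> t\<^sup>2\<close>\<close>
  obtain k where k: "sqrt t ^ p \<le> t - k * (t - t\<^sup>2)" "1 - 2 * 0.5 powr (real p / 2) \<le> k"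
  proof (cases "p = 3")
    case True
    have "u ^ 3 \<le> u\<^sup>2 - 1/2 * (u\<^sup>2 - (u\<^sup>2)\<^sup>2)"
      using zero_le_power2[of "u * (1 - u)"] by (simp add: algebra_simps power2_eq_square power3_eq_cube)
    moreover have "(0.5::real) powr 2 \<le> 0.5 powr (real p / 2)"
      using True by (intro powr_mono') auto
    then have "1/4 \<le> (0.5::real) powr (real p / 2)"
      by (simp add: powr_numeral power2_eq_square)
    ultimately show ?thesis
      using True u by (intro that[of "1/2"]) (auto simp: u_def[symmetric])
  next
    case False
    then have "u ^ p \<le> u ^ 4"
      using assms(3) u by (intro power_decreasing) auto
    then show ?thesis
      using u by (intro that[of 1]) (auto simp: u_def[symmetric] power_mult[symmetric])
  qed
  have "0 \<le> t - t\<^sup>2"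
    using assms by (simp add: power2_eq_square mult_left_le)
  with k(2) have "(1 - 2 * 0.5 powr (real p / 2)) * (t - t\<^sup>2) \<le> k * (t - t\<^sup>2)"
    by (rule mult_right_mono)
  with k(1) show ?thesis
    by linarith
qed

lemma half_powr_gap_pos:
  assumes "2 < p"
  shows "0 < 1 - 2 * (0.5::real) powr (real p / 2)"
proof -
  have "(0.5::real) powr (real p / 2) < 0.5 powr 1"
    using assms by (intro powr_less_mono') auto
  then show ?thesis
    by simp
qed

lemma norm_diff_axis_square:
  fixes q :: "real ^ 'n"
  assumes "norm q = 1"
  shows "(norm (q - axis i 1))\<^sup>2 = 2 - 2 * q $ i" and "(norm (q + axis i 1))\<^sup>2 = 2 + 2 * q $ i"
  using assms power2_norm_eq_inner[of q, symmetric]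
  by (simp_all add: power2_norm_eq_inner inner_simps inner_axis inner_axis' axis_nth)

lemma sum_fourth_powers_le_max_abs:
  fixes q :: "real ^ 'n"
  assumes "norm q = 1" and "\<And>i. \<bar>q $ i\<bar> \<le> \<bar>q $ m\<bar>"
  shows "(\<Sum>i\<in>UNIV. (q $ i) ^ 4) \<le> \<bar>q $ m\<bar>"
proof -
  have sum_squares: "(\<Sum>i\<in>UNIV. (q $ i)\<^sup>2) = 1"
    using assms(1) by (simp add: norm_vec_def L2_set_def)
  have "(\<Sum>i\<in>UNIV. (q $ i) ^ 4) \<le> (\<Sum>i\<in>UNIV. (q $ m)\<^sup>2 * (q $ i)\<^sup>2)"
  proof (rule sum_mono)
    fix i
    have "(q $ i) ^ 4 = (q $ i)\<^sup>2 * (q $ i)\<^sup>2"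
      by algebra
    also have "\<dots> \<le> (q $ m)\<^sup>2 * (q $ i)\<^sup>2"
      using assms(2)[of i] by (intro mult_right_mono) (simp_all add: abs_le_square_iff)
    finally show "(q $ i) ^ 4 \<le> (q $ m)\<^sup>2 * (q $ i)\<^sup>2" .
  qed
  also have "\<dots> = (q $ m)\<^sup>2"
    by (simp add: sum_distrib_left[symmetric] sum_squares)
  also have "\<dots> \<le> \<bar>q $ m\<bar>"
  proof -
    have "(q $ m)\<^sup>2 \<le> 1"
      using member_le_sum[of m UNIV "\<lambda>i. (q $ i)\<^sup>2"] sum_squares by simp
    then have "\<bar>q $ m\<bar>\<^sup>2 \<le> \<bar>q $ m\<bar> ^ 1"
      by (intro power_decreasing) (simp_all add: abs_square_le_1)
    then show ?thesis
      by simp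
  qed
  finally show ?thesis .
qed

lemma half_min_dist_axis_le:
  fixes q :: "real ^ 'n"
  assumes "norm q = 1"
  shows "(1/2) * (MIN i. min ((norm (q - axis i 1))\<^sup>2) ((norm (q + axis i 1))\<^sup>2))
    \<le> 1 - (\<Sum>i\<in>UNIV. (q $ i) ^ 4)"
proof -
  obtain m where m: "\<And>i. \<bar>q $ i\<bar> \<le> \<bar>q $ m\<bar>"
    using ex_is_arg_min_if_finite[of UNIV "\<lambda>i. - \<bar>q $ i\<bar>"] by (auto simp: is_arg_min_linorder)
  have "(MIN i. min ((norm (q - axis i 1))\<^sup>2) ((norm (q + axis i 1))\<^sup>2))
      \<le> min ((norm (q - axis m 1))\<^sup>2) ((norm (q + axis m 1))\<^sup>2)"
    by (rule Min_le) auto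
  also have "\<dots> = 2 - 2 * \<bar>q $ m\<bar>"
    using assms by (simp add: norm_diff_axis_square abs_if min_def)
  finally show ?thesis
    using sum_fourth_powers_le_max_abs[OF assms m] by simp
qed

lemma expectation_sqrt_sum_power_le:
  fixes x :: "'n::finite \<Rightarrow> real"
  assumes x_nonneg: "\<And>i. 0 \<le> x i" and x_sum: "(\<Sum>i\<in>UNIV. x i) = 1"
    and "2 < p" "0 \<le> \<theta>" "\<theta> \<le> 1"
  shows "measure_pmf.expectation (bern_subset \<theta>) (\<lambda>\<Omega>. sqrt (\<Sum>i\<in>\<Omega>. x i) ^ p)
    \<le> \<theta> - (1 - 2 * 0.5 powr (real p / 2)) * (\<theta> * (1 - \<theta>) * (1 - (\<Sum>i\<in>UNIV. (x i)\<^sup>2)))"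
proof -
  define c :: real where "c = 1 - 2 * 0.5 powr (real p / 2)"
  define T where "T \<Omega> = (\<Sum>i\<in>\<Omega>. x i)" for \<Omega>
  have T_range: "0 \<le> T \<Omega> \<and> T \<Omega> \<le> 1" for \<Omega>
    using sum_mono2[of UNIV \<Omega> x] x_nonneg x_sum by (auto simp: T_def intro: sum_nonneg)
  have "sqrt (T \<Omega>) ^ p \<le> T \<Omega> - c * (T \<Omega> - (T \<Omega>)\<^sup>2)" for \<Omega>
    using T_range[of \<Omega>] sqrt_power_le[OF _ _ \<open>2 < p\<close>] unfolding c_def by blast
  then have "measure_pmf.expectation (bern_subset \<theta>) (\<lambda>\<Omega>. sqrt (T \<Omega>) ^ p)
      \<le> measure_pmf.expectation (bern_subset \<theta>) (\<lambda>\<Omega>. T \<Omega> - c * (T \<Omega> - (T \<Omega>)\<^sup>2))"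
    by (intro integral_mono) auto
  also have "\<dots> = measure_pmf.expectation (bern_subset \<theta>) T
      - c * (measure_pmf.expectation (bern_subset \<theta>) T
        - measure_pmf.expectation (bern_subset \<theta>) (\<lambda>\<Omega>. (T \<Omega>)\<^sup>2))"
    by simp
  also have "\<dots> = \<theta> - c * (\<theta> * (1 - \<theta>) * (1 - (\<Sum>i\<in>UNIV. (x i)\<^sup>2)))"
  proof -
    have ET: "measure_pmf.expectation (bern_subset \<theta>) T = \<theta>"
      using expectation_bern_subset_sum[OF assms(4,5), of x] by (simp add: T_def[abs_def] x_sum)
    have ET2: "measure_pmf.expectation (bern_subset \<theta>) (\<lambda>\<Omega>. (T \<Omega>)\<^sup>2)
        = \<theta>\<^sup>2 + \<theta> * (1 - \<theta>) * (\<Sum>i\<in>UNIV. (x i)\<^sup>2)"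
      using expectation_bern_subset_square_sum[OF assms(4,5), of x] by (simp add: T_def x_sum)
    show ?thesis
      unfolding ET ET2 by (simp add: algebra_simps power2_eq_square)
  qed
  finally show ?thesis
    by (simp add: T_def c_def)
qed

theorem mainTheorem7:
  fixes q :: "real ^ 'n" and p :: nat and \<theta> :: real
  assumes "p > 2" and "0 < \<theta>" and "\<theta> < 1" and "norm q = 1"
  shows "(1/2) * (MIN i. min ((norm (q - axis i 1))\<^sup>2) ((norm (q + axis i 1))\<^sup>2))
     \<le> (1 / (1 - 2 * (0.5::real) powr (real p / 2))) / (\<theta> * (1 - \<theta>)) *
        (\<theta> - measure_pmf.expectation (bern_subset \<theta>) (\<lambda>\<Omega>. (subvec_norm q \<Omega>) ^ p))"
proof -
  define c :: real where "c = 1 - 2 * 0.5 powr (real p / 2)"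
  define s where "s = (\<Sum>i\<in>UNIV. (q $ i) ^ 4)"
  define E where "E = measure_pmf.expectation (bern_subset \<theta>) (\<lambda>\<Omega>. (subvec_norm q \<Omega>) ^ p)"
  have "(\<Sum>i\<in>UNIV. (q $ i)\<^sup>2) = 1"
    using \<open>norm q = 1\<close> by (simp add: norm_vec_def L2_set_def)
  then have "E \<le> \<theta> - c * (\<theta> * (1 - \<theta>) * (1 - s))"
    using expectation_sqrt_sum_power_le[of "\<lambda>i. (q $ i)\<^sup>2" p \<theta>] assms
    by (simp add: E_def subvec_norm_def c_def s_def power_mult[symmetric])
  then have "(1 - s) * (c * (\<theta> * (1 - \<theta>))) \<le> \<theta> - E"
    by (simp add: algebra_simps)
  moreover have "0 < c * (\<theta> * (1 - \<theta>))"
    using half_powr_gap_pos[OF \<open>p > 2\<close>] assms by (simp add: c_def)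
  ultimately have "1 - s \<le> (\<theta> - E) / (c * (\<theta> * (1 - \<theta>)))"
    by (simp add: pos_le_divide_eq)
  also have "\<dots> = (1 / c) / (\<theta> * (1 - \<theta>)) * (\<theta> - E)"
    by simp
  finally show ?thesis
    using half_min_dist_axis_le[OF \<open>norm q = 1\<close>] unfolding E_def c_def s_def by linarith
qed

end
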